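(* Let $K\ge2$, $E=[-1,1]^K$, $\theta$ the uniform probability measure on $[-1,1]$, and $\Phi:E\to[0,\Phi^*]$ measurable. Let $\pi$ be the probability density on $E$ with respect to $\bigotimes_{i=1}^K\theta(du_i)$ given by $\pi(u)=\exp\{-\Phi(u)\}/\int_E\exp\{-\Phi(v)\}\bigotimes_i\theta(dv_i)$. Let $k\in\mathbb{N}$, $k<K$, and let $a_1,\dots,a_k$ be a partition of $\{1,\dots,K\}$ into disjoint nonempty subsets. Define the (deterministic-scan) Gibbs kernel $$M(u,du')=\Big(\prod_{j=1}^k\pi(u'_{a_j}\mid u'_{a_1:a_{j-1}},u_{a_{j+1}:a_k})\Big)\bigotimes_{i=1}^K\theta(du'_i),$$ where $\pi(u'_{a_j}\mid u'_{a_1:a_{j-1}},u_{a_{j+1}:a_k})=\pi(u'_{a_1:a_j},u_{a_{j+1}:a_k})\big/\int_{[-1,1]^{|a_j|}}\pi(u'_{a_1:a_j},u_{a_{j+1}:a_k})\bigotimes_{i\in a_j}\theta(du'_i)$. Then for all $u,\tilde u\in E$, $$M(\tilde u,du')\ge\exp\{-2\Phi^*(k-1)\}\,M(u,du').$$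
   Context: Notation $u_{a_1:a_{j-1}}$ denotes the coordinates of $u$ with indices in $a_1\cup\dots\cup a_{j-1}$, and $(u'_{a_1:a_j},u_{a_{j+1}:a_k})$ denotes the point of $E$ whose coordinates in $a_1\cup\cdots\cup a_j$ are taken from $u'$ and the remaining ones from $u$. *)

theory Defs
  imports "HOL-Probability.Probability"
begin

definition theta :: "real measure" where
  "theta = uniform_measure lborel {-1..1}"

text \<open>Product measure over an index set I (coordinates in E are extensional maps).\<close>
definition prodtheta :: "nat set \<Rightarrow> (nat \<Rightarrow> real) measure" where
  "prodtheta I = PiM I (\<lambda>_. theta)"

definition target_dens :: "nat \<Rightarrow> ((nat \<Rightarrow> real) \<Rightarrow> real) \<Rightarrow> (nat \<Rightarrow> real) \<Rightarrow> real" where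
  "target_dens K Phi u =
     exp (- Phi u) / (\<integral> v. exp (- Phi v) \<partial>prodtheta {1..K})"

definition mixpt :: "(nat \<Rightarrow> nat set) \<Rightarrow> nat \<Rightarrow> (nat \<Rightarrow> real) \<Rightarrow> (nat \<Rightarrow> real) \<Rightarrow> (nat \<Rightarrow> real)" where
  "mixpt a j u' u = (\<lambda>i. if i \<in> (\<Union>l\<in>{1..j}. a l) then u' i else u i)"

definition cond_dens ::
  "nat \<Rightarrow> ((nat \<Rightarrow> real) \<Rightarrow> real) \<Rightarrow> (nat \<Rightarrow> nat set) \<Rightarrow> nat \<Rightarrow> (nat \<Rightarrow> real) \<Rightarrow> (nat \<Rightarrow> real) \<Rightarrow> real" where
  "cond_dens K Phi a j u u' =
     target_dens K Phi (mixpt a j u' u) /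
     (\<integral> w. target_dens K Phi (mixpt a j (\<lambda>i. if i \<in> a j then w i else u' i) u)
        \<partial>prodtheta (a j))"

definition gibbs_dens ::
  "nat \<Rightarrow> ((nat \<Rightarrow> real) \<Rightarrow> real) \<Rightarrow> nat \<Rightarrow> (nat \<Rightarrow> nat set) \<Rightarrow> (nat \<Rightarrow> real) \<Rightarrow> (nat \<Rightarrow> real) \<Rightarrow> real" where
  "gibbs_dens K Phi k a u u' = (\<Prod>j\<in>{1..k}. cond_dens K Phi a j u u')"

definition gibbs_kernel ::
  "nat \<Rightarrow> ((nat \<Rightarrow> real) \<Rightarrow> real) \<Rightarrow> nat \<Rightarrow> (nat \<Rightarrow> nat set) \<Rightarrow> (nat \<Rightarrow> real) \<Rightarrow> (nat \<Rightarrow> real) measure" where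
  "gibbs_kernel K Phi k a u =
     density (prodtheta {1..K}) (\<lambda>u'. ennreal (gibbs_dens K Phi k a u u'))"

end

theory Submission
  imports Defs
begin

text \<open>
  Since \<open>0 \<le> \<Phi> \<le> \<Phi>\<^sup>*\<close>, any two values of \<open>\<pi>\<close> agree up to a factor \<open>exp \<Phi>\<^sup>*\<close>. A full
  conditional is a value of \<open>\<pi>\<close> divided by a block average of such values, so it lies in
  \<open>[exp (-\<Phi>\<^sup>*), exp \<Phi>\<^sup>*]\<close>, and the conditionals for two starting points differ by at most a
  factor \<open>exp (2\<Phi>\<^sup>*)\<close>. The last conditional of the sweep is evaluated after every block has
  been resampled, so it does not depend on the starting point at all; only the first
  \<open>k - 1\<close> factors contribute, which gives the constant \<open>exp (-2\<Phi>\<^sup>*(k - 1))\<close>.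
\<close>

lemma prob_space_theta: "prob_space theta"
  unfolding theta_def by (rule prob_space_uniform_measure) auto

lemma space_theta [simp]: "space theta = UNIV"
  unfolding theta_def by simp

lemma sets_theta [simp]: "sets theta = sets borel"
  unfolding theta_def by simp

lemma prob_space_prodtheta: "prob_space (prodtheta I)"
  unfolding prodtheta_def by (intro prob_space_PiM prob_space_theta)

lemma space_prodtheta: "space (prodtheta I) = (\<Pi>\<^sub>E i\<in>I. UNIV)"
  unfolding prodtheta_def by (simp add: space_PiM)

lemma (in prob_space) integral_between_bounds:
  fixes g :: "'a \<Rightarrow> real"
  assumes "g \<in> borel_measurable M" and "\<And>x. x \<in> space M \<Longrightarrow> lo \<le> g x \<and> g x \<le> hi"
  shows "lo \<le> integral\<^sup>L M g \<and> integral\<^sup>L M g \<le> hi"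
proof -
  have "integrable M g"
    using assms by (intro integrable_const_bound[where B = "max \<bar>lo\<bar> \<bar>hi\<bar>"] AE_I2) fastforce+
  then show ?thesis
    using assms(2) by (auto intro!: integral_ge_const integral_le_const AE_I2)
qed

lemma emeasure_density_cmult_le:
  fixes f g :: "'a \<Rightarrow> real"
  assumes "f \<in> borel_measurable M" "g \<in> borel_measurable M" "A \<in> sets M" "0 \<le> c"
    and "\<And>x. x \<in> space M \<Longrightarrow> 0 \<le> f x \<and> c * f x \<le> g x"
  shows "ennreal c * emeasure (density M (\<lambda>x. ennreal (f x))) A \<le> emeasure (density M (\<lambda>x. ennreal (g x))) A"
proof -
  have "ennreal c * emeasure (density M (\<lambda>x. ennreal (f x))) A = (\<integral>\<^sup>+ x. ennreal c * (ennreal (f x) * indicator A x) \<partial>M)"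
    using assms(1,3) by (simp add: emeasure_density nn_integral_cmult)
  also have "\<dots> \<le> (\<integral>\<^sup>+ x. ennreal (g x) * indicator A x \<partial>M)"
  proof (rule nn_integral_mono)
    fix x assume "x \<in> space M"
    then have "ennreal c * ennreal (f x) \<le> ennreal (g x)"
      using assms(4,5) by (simp add: ennreal_mult[symmetric] ennreal_leI)
    then show "ennreal c * (ennreal (f x) * indicator A x) \<le> ennreal (g x) * indicator A x"
      by (cases "x \<in> A") (simp_all add: mult.assoc[symmetric])
  qed
  also have "\<dots> = emeasure (density M (\<lambda>x. ennreal (g x))) A"
    using assms(2,3) by (simp add: emeasure_density)
  finally show ?thesis .
qed

lemma measurable_prodtheta_component:
  assumes "i \<in> I"
  shows "(\<lambda>x. x i) \<in> borel_measurable (prodtheta I)"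
  using measurable_component_singleton[OF assms, of "\<lambda>_. theta"]
  unfolding prodtheta_def by (simp add: measurable_cong_sets[OF refl sets_theta])

lemma quotient_bounds_of_comparable:
  fixes N D c :: real
  assumes "0 < c" and "0 < N" and "c * N \<le> D" and "D \<le> N / c"
  shows "c \<le> N / D \<and> N / D \<le> 1 / c"
proof -
  have "0 < D"
    using assms(1-3) by (smt (verit) mult_pos_pos)
  moreover have "c * D \<le> N"
    using assms(1,4) by (simp add: le_divide_eq mult.commute)
  ultimately show ?thesis
    using assms(1,3) by (simp add: le_divide_eq divide_le_eq mult.commute)
qed

lemma prod_cmult_le:
  fixes f g :: "'a \<Rightarrow> 'b::linordered_semidom"
  assumes "0 \<le> c" and "\<And>i. i \<in> A \<Longrightarrow> 0 \<le> f i \<and> c * f i \<le> g i"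
  shows "c ^ card A * prod f A \<le> prod g A"
proof -
  have "c ^ card A * prod f A = (\<Prod>i\<in>A. c * f i)"
    by (simp add: prod.distrib)
  also have "\<dots> \<le> prod g A"
    using assms by (intro prod_mono) simp
  finally show ?thesis .
qed

lemma mixpt_in_space:
  assumes "(\<Union>l\<in>{1..j}. a l) \<subseteq> I" and "v \<in> space (prodtheta I)"
  shows "mixpt a j x v \<in> space (prodtheta I)"
proof -
  have "mixpt a j x v i = undefined" if "i \<notin> I" for i
    using assms that by (auto simp: mixpt_def space_prodtheta)
  then show ?thesis
    by (simp add: space_prodtheta PiE_iff extensional_def)
qed

lemma mixpt_covering_eq:
  assumes "I \<subseteq> (\<Union>l\<in>{1..j}. a l)" and "u \<in> space (prodtheta I)" "v \<in> space (prodtheta I)"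
  shows "mixpt a j x u = mixpt a j x v"
proof
  fix i
  show "mixpt a j x u i = mixpt a j x v i"
  proof (cases "i \<in> I")
    case False
    with assms(2,3) have "u i = v i"
      by (simp add: space_prodtheta PiE_def extensional_def)
    then show ?thesis by (simp add: mixpt_def)
  qed (use assms(1) in \<open>auto simp: mixpt_def\<close>)
qed

lemma measurable_mixpt:
  assumes "(\<Union>l\<in>{1..j}. a l) \<subseteq> I" and "v \<in> space (prodtheta I)"
    and "\<And>i. i \<in> I \<Longrightarrow> (\<lambda>x. f x i) \<in> borel_measurable M"
  shows "(\<lambda>x. mixpt a j (f x) v) \<in> M \<rightarrow>\<^sub>M prodtheta I"
  unfolding prodtheta_def
proof (rule measurable_PiM_single')
  fix i assume "i \<in> I"
  then have "(\<lambda>x. mixpt a j (f x) v i) \<in> borel_measurable M"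
    using assms(3) by (cases "i \<in> (\<Union>l\<in>{1..j}. a l)") (simp_all add: mixpt_def)
  then show "(\<lambda>x. mixpt a j (f x) v i) \<in> M \<rightarrow>\<^sub>M theta"
    by (simp add: measurable_cong_sets[OF refl sets_theta])
next
  show "(\<lambda>x. mixpt a j (f x) v) \<in> space M \<rightarrow> (\<Pi>\<^sub>E i\<in>I. space theta)"
    using mixpt_in_space[OF assms(1,2)] by (simp add: space_prodtheta)
qed

context
  fixes K :: nat and Phi :: "(nat \<Rightarrow> real) \<Rightarrow> real" and Phistar :: real
  assumes Phi_measurable: "Phi \<in> borel_measurable (prodtheta {1..K})"
    and Phi_bounded: "\<And>u. u \<in> space (prodtheta {1..K}) \<Longrightarrow> 0 \<le> Phi u \<and> Phi u \<le> Phistar"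
begin

lemma target_dens_measurable: "target_dens K Phi \<in> borel_measurable (prodtheta {1..K})"
  unfolding target_dens_def using Phi_measurable by simp

lemma target_dens_pos:
  assumes "x \<in> space (prodtheta {1..K})"
  shows "0 < target_dens K Phi x"
proof -
  interpret prob_space "prodtheta {1..K}" by (rule prob_space_prodtheta)
  have "exp (- Phistar) \<le> (\<integral> v. exp (- Phi v) \<partial>prodtheta {1..K})"
    using Phi_measurable Phi_bounded by (intro integral_between_bounds[where hi = 1, THEN conjunct1]) simp_all
  then have "0 < (\<integral> v. exp (- Phi v) \<partial>prodtheta {1..K})"
    by (smt (verit) exp_gt_zero)
  then show ?thesis
    unfolding target_dens_def by simp
qed

lemma target_dens_comparable:
  assumes "x \<in> space (prodtheta {1..K})" and "y \<in> space (prodtheta {1..K})"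
  shows "exp (- Phistar) * target_dens K Phi y \<le> target_dens K Phi x"
proof -
  have "exp (- Phistar) * exp (- Phi y) \<le> exp (- Phi x)"
    using Phi_bounded[OF assms(1)] Phi_bounded[OF assms(2)] by (simp add: exp_add[symmetric])
  moreover have "0 \<le> (\<integral> v. exp (- Phi v) \<partial>prodtheta {1..K})"
    by simp
  ultimately show ?thesis
    unfolding target_dens_def times_divide_eq_right by (rule divide_right_mono)
qed

lemma cond_dens_bounds:
  assumes "(\<Union>l\<in>{1..j}. a l) \<subseteq> {1..K}" and "u \<in> space (prodtheta {1..K})"
  shows "exp (- Phistar) \<le> cond_dens K Phi a j u u' \<and> cond_dens K Phi a j u u' \<le> exp Phistar"
proof -
  define N where "N = target_dens K Phi (mixpt a j u' u)"
  define g where "g w = target_dens K Phi (mixpt a j (\<lambda>i. if i \<in> a j then w i else u' i) u)" for w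
  have in_space: "mixpt a j x u \<in> space (prodtheta {1..K})" for x
    using assms by (rule mixpt_in_space)
  have "(\<lambda>w. if i \<in> a j then w i else u' i) \<in> borel_measurable (prodtheta (a j))" for i
    by (cases "i \<in> a j") (simp_all add: measurable_prodtheta_component)
  then have "(\<lambda>w. mixpt a j (\<lambda>i. if i \<in> a j then w i else u' i) u) \<in> prodtheta (a j) \<rightarrow>\<^sub>M prodtheta {1..K}"
    using assms by (intro measurable_mixpt)
  then have g_measurable: "g \<in> borel_measurable (prodtheta (a j))"
    unfolding g_def by (rule measurable_compose[OF _ target_dens_measurable])
  have "exp (- Phistar) * N \<le> g w \<and> g w \<le> N / exp (- Phistar)" for w
    using target_dens_comparable[OF in_space in_space, of _ u'] target_dens_comparable[OF in_space in_space, of u']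
    unfolding N_def g_def by (simp add: le_divide_eq mult.commute)
  then have "exp (- Phistar) * N \<le> integral\<^sup>L (prodtheta (a j)) g
      \<and> integral\<^sup>L (prodtheta (a j)) g \<le> N / exp (- Phistar)"
    by (intro prob_space.integral_between_bounds[OF prob_space_prodtheta g_measurable])
  moreover have "0 < N"
    unfolding N_def using in_space by (rule target_dens_pos)
  ultimately have "exp (- Phistar) \<le> N / integral\<^sup>L (prodtheta (a j)) g
      \<and> N / integral\<^sup>L (prodtheta (a j)) g \<le> 1 / exp (- Phistar)"
    by (intro quotient_bounds_of_comparable) auto
  moreover have "cond_dens K Phi a j u u' = N / integral\<^sup>L (prodtheta (a j)) g"
    unfolding cond_dens_def N_def g_def ..
  ultimately show ?thesis
    by (simp add: exp_minus divide_inverse)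
qed

lemma cond_dens_measurable:
  assumes "(\<Union>l\<in>{1..j}. a l) \<subseteq> {1..K}" and "u \<in> space (prodtheta {1..K})"
  shows "cond_dens K Phi a j u \<in> borel_measurable (prodtheta {1..K})"
proof -
  interpret sigma_finite_measure "prodtheta (a j)"
    by (intro prob_space_imp_sigma_finite prob_space_prodtheta)
  have "(\<lambda>u'. mixpt a j u' u) \<in> prodtheta {1..K} \<rightarrow>\<^sub>M prodtheta {1..K}"
    using assms measurable_prodtheta_component by (rule measurable_mixpt[where f = "\<lambda>u'. u'"])
  moreover have "(\<lambda>x. if i \<in> a j then snd x i else fst x i)
      \<in> borel_measurable (prodtheta {1..K} \<Otimes>\<^sub>M prodtheta (a j))" if "i \<in> {1..K}" for i
    using that by (cases "i \<in> a j")
      (simp_all add: measurable_compose[OF measurable_snd measurable_prodtheta_component]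
        measurable_compose[OF measurable_fst measurable_prodtheta_component])
  then have "(\<lambda>x. mixpt a j (\<lambda>i. if i \<in> a j then snd x i else fst x i) u)
      \<in> prodtheta {1..K} \<Otimes>\<^sub>M prodtheta (a j) \<rightarrow>\<^sub>M prodtheta {1..K}"
    using assms by (intro measurable_mixpt)
  ultimately show ?thesis
    unfolding cond_dens_def using target_dens_measurable by measurable
qed

lemma cond_dens_start_comparable:
  assumes "(\<Union>l\<in>{1..j}. a l) \<subseteq> {1..K}"
    and "u \<in> space (prodtheta {1..K})" and "ut \<in> space (prodtheta {1..K})"
  shows "exp (- 2 * Phistar) * cond_dens K Phi a j u u' \<le> cond_dens K Phi a j ut u'"
proof -
  have "exp (- 2 * Phistar) * cond_dens K Phi a j u u' \<le> exp (- 2 * Phistar) * exp Phistar"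
    using cond_dens_bounds[OF assms(1,2)] by (intro mult_left_mono) auto
  also have "\<dots> = exp (- Phistar)"
    by (simp add: mult_exp_exp)
  also have "\<dots> \<le> cond_dens K Phi a j ut u'"
    using cond_dens_bounds[OF assms(1,3)] by simp
  finally show ?thesis .
qed

lemma gibbs_dens_measurable:
  assumes "(\<Union>j\<in>{1..k}. a j) \<subseteq> {1..K}" and "u \<in> space (prodtheta {1..K})"
  shows "gibbs_dens K Phi k a u \<in> borel_measurable (prodtheta {1..K})"
  unfolding gibbs_dens_def
proof (rule borel_measurable_prod)
  fix j assume "j \<in> {1..k}"
  then have "(\<Union>l\<in>{1..j}. a l) \<subseteq> (\<Union>l\<in>{1..k}. a l)"
    by (intro UN_mono) auto
  with assms show "cond_dens K Phi a j u \<in> borel_measurable (prodtheta {1..K})"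
    by (intro cond_dens_measurable) auto
qed

lemma gibbs_dens_lower_bound:
  assumes cover: "(\<Union>j\<in>{1..k}. a j) = {1..K}" and "1 \<le> k"
    and u: "u \<in> space (prodtheta {1..K})" and ut: "ut \<in> space (prodtheta {1..K})"
  shows "0 \<le> gibbs_dens K Phi k a u u'
    \<and> exp (- 2 * Phistar * (real k - 1)) * gibbs_dens K Phi k a u u' \<le> gibbs_dens K Phi k a ut u'"
proof -
  obtain m where k: "k = Suc m"
    using \<open>1 \<le> k\<close> by (cases k) auto
  have prefix: "(\<Union>l\<in>{1..j}. a l) \<subseteq> {1..K}" if "j \<le> k" for j
    using that cover[symmetric] by (auto intro: UN_mono)
  have cond_nonneg: "0 \<le> cond_dens K Phi a j v u'" if "j \<le> k" "v \<in> space (prodtheta {1..K})" for j v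
    using cond_dens_bounds[OF prefix that(2)] that(1) by (smt (verit) exp_gt_zero)
  \<comment> \<open>After the last block update no coordinate of the starting point survives.\<close>
  have "mixpt a k x ut = mixpt a k x u" for x
    using cover ut u by (intro mixpt_covering_eq) auto
  then have last_eq: "cond_dens K Phi a k ut u' = cond_dens K Phi a k u u'"
    unfolding cond_dens_def by simp
  have "exp (- 2 * Phistar) ^ card {1..m} * (\<Prod>j\<in>{1..m}. cond_dens K Phi a j u u')
      \<le> (\<Prod>j\<in>{1..m}. cond_dens K Phi a j ut u')"
    using k cond_nonneg[OF _ u] cond_dens_start_comparable[OF prefix u ut] by (intro prod_cmult_le) auto
  moreover have "exp (- 2 * Phistar) ^ card {1..m} = exp (- 2 * Phistar * (real k - 1))"
    using k by (simp add: exp_of_nat_mult[symmetric] mult_ac)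
  ultimately have "exp (- 2 * Phistar * (real k - 1)) * gibbs_dens K Phi k a u u'
      \<le> (\<Prod>j\<in>{1..m}. cond_dens K Phi a j ut u') * cond_dens K Phi a k u u'"
    unfolding gibbs_dens_def k prod.cl_ivl_Suc
    using cond_nonneg[OF _ u, of "Suc m"] k by (simp add: mult.assoc[symmetric] mult_right_mono)
  also have "\<dots> = gibbs_dens K Phi k a ut u'"
    unfolding gibbs_dens_def k prod.cl_ivl_Suc using last_eq k by simp
  moreover have "0 \<le> gibbs_dens K Phi k a u u'"
    unfolding gibbs_dens_def using cond_nonneg[OF _ u] by (intro prod_nonneg) auto
  ultimately show ?thesis
    by simp
qed

end

theorem proposition4p3:
  fixes K k :: nat and Phi :: "(nat \<Rightarrow> real) \<Rightarrow> real" and Phistar :: real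
    and a :: "nat \<Rightarrow> nat set"
  assumes "K \<ge> 2"
    and "Phi \<in> borel_measurable (prodtheta {1..K})"
    and "\<And>u. u \<in> space (prodtheta {1..K}) \<Longrightarrow> 0 \<le> Phi u \<and> Phi u \<le> Phistar"
    and "k < K"
    and "\<And>j. j \<in> {1..k} \<Longrightarrow> a j \<noteq> {}"
    and "\<And>j l. j \<in> {1..k} \<Longrightarrow> l \<in> {1..k} \<Longrightarrow> j \<noteq> l \<Longrightarrow> a j \<inter> a l = {}"
    and "(\<Union>j\<in>{1..k}. a j) = {1..K}"
    and "u \<in> space (prodtheta {1..K})" and "ut \<in> space (prodtheta {1..K})"
    and "A \<in> sets (prodtheta {1..K})"
  shows "emeasure (gibbs_kernel K Phi k a ut) A
           \<ge> ennreal (exp (- 2 * Phistar * (real k - 1))) * emeasure (gibbs_kernel K Phi k a u) A"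
proof -
  have "1 \<le> k"
    using assms(1,7) by (cases k) auto
  have gibbs_measurable: "gibbs_dens K Phi k a v \<in> borel_measurable (prodtheta {1..K})"
    if "v \<in> space (prodtheta {1..K})" for v
    by (rule gibbs_dens_measurable) (use assms(2,3,7) that in auto)
  have gibbs_bound: "0 \<le> gibbs_dens K Phi k a u u'
      \<and> exp (- 2 * Phistar * (real k - 1)) * gibbs_dens K Phi k a u u' \<le> gibbs_dens K Phi k a ut u'" for u'
    by (rule gibbs_dens_lower_bound) (use assms(2,3,7-9) \<open>1 \<le> k\<close> in auto)
  show ?thesis
    unfolding gibbs_kernel_def
    using gibbs_measurable[OF assms(8)] gibbs_measurable[OF assms(9)] assms(10) gibbs_bound
    by (intro emeasure_density_cmult_le) auto
qed

end
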